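(* Let $0<\gamma<2$, $\gamma\ne 4/3$, let $\chi\in C^3(\mathbb{R})$ with $\chi>0$, and let $\phi_1$ satisfy $\chi'(\phi_1)=0$. Set $\Delta_1=(\gamma-2)/4$ and $\Delta_2=(4-3\gamma)/6$. Then: (a) $(x,y,z,\phi)=(0,0,1,\phi_1)$ is an equilibrium of system $(\ast)$, and the linearization of $(\ast)$ there has eigenvalues $\gamma/2,\ \gamma,\ \Delta_1\pm\sqrt{\Delta_1^2+\Delta_2\,\chi''(\phi_1)/\chi(\phi_1)}$. (b) For the planar system $y'=\tfrac12(1-y^2)\Big(y(\gamma-2)+\frac{4-3\gamma}{\sqrt6}\frac{\chi'(\phi)}{\chi(\phi)}\Big)$, $\phi'=\sqrt{2/3}\,y$ (the restriction of $(\ast)$ to $x=0$, $y^2+z^2=1$), the equilibrium $(y,\phi)=(0,\phi_1)$ has linearization eigenvalues $\Delta_1\pm\sqrt{\Delta_1^2+\Delta_2\chi''(\phi_1)/\chi(\phi_1)}$, and it is: a stable focus if either $0<\gamma<4/3$ and $\chi''(\phi_1)<-\Delta_1^2\chi(\phi_1)/\Delta_2$, or $4/3<\gamma<2$ and $\chi''(\phi_1)>-\Delta_1^2\chi(\phi_1)/\Delta_2$; a stable node if either $0<\gamma<4/3$ and $-\Delta_1^2\chi(\phi_1)/\Delta_2\le\chi''(\phi_1)<0$, or $4/3<\gamma<2$ and $0<\chi''(\phi_1)\le-\Delta_1^2\chi(\phi_1)/\Delta_2$; a saddle if either $0<\gamma<4/3$ and $\chi''(\phi_1)>0$, or $4/3<\gamma<2$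 and $\chi''(\phi_1)<0$; and non-hyperbolic if $\chi''(\phi_1)=0$.
   Context: System $(\ast)$ (prime $=d/d\tau$): $x'=\tfrac12 x(2y^2+\gamma z^2)$; $y'=y^3+\tfrac12(\gamma z^2-2)y-\frac{x^2V'(\phi)}{3\sqrt6}+\frac{(4-3\gamma)z^2}{2\sqrt6}\frac{\chi'(\phi)}{\chi(\phi)}$; $z'=\tfrac12 z(2y^2+(z^2-1)\gamma)-\frac{(4-3\gamma)yz}{2\sqrt6}\frac{\chi'(\phi)}{\chi(\phi)}$; $\phi'=\sqrt{2/3}\,y$, where $V\in C^3$, $V\ge0$. Eigenvalues in (a) refer to the Jacobian of the vector field at the point (with the $z$-direction understood as the direction normal to the circle $y^2+z^2=1$ within the constraint surface). *)

theory Defs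
  imports "HOL-Analysis.Analysis" "HOL-Computational_Algebra.Polynomial"
begin

text \<open>The vector field of system (*), on the state space real^4 with coordinates
  u$1 = x, u$2 = y, u$3 = z, u$4 = phi.  V1 is V', chi1 is chi'.\<close>
definition sysF :: "real \<Rightarrow> (real \<Rightarrow> real) \<Rightarrow> (real \<Rightarrow> real) \<Rightarrow> (real \<Rightarrow> real)
                     \<Rightarrow> real^4 \<Rightarrow> real^4" where
  "sysF \<gamma> V1 chi chi1 u =
     (let x = u$1; y = u$2; z = u$3; \<phi> = u$4 in
      vector [ 1/2 * x * (2 * y^2 + \<gamma> * z^2),
               y^3 + 1/2 * (\<gamma> * z^2 - 2) * y - x^2 * V1 \<phi> / (3 * sqrt 6)
                 + (4 - 3*\<gamma>) * z^2 / (2 * sqrt 6) * (chi1 \<phi> / chi \<phi>),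
               1/2 * z * (2 * y^2 + (z^2 - 1) * \<gamma>)
                 - (4 - 3*\<gamma>) * y * z / (2 * sqrt 6) * (chi1 \<phi> / chi \<phi>),
               sqrt (2/3) * y ])"

definition planarF :: "real \<Rightarrow> (real \<Rightarrow> real) \<Rightarrow> (real \<Rightarrow> real) \<Rightarrow> real^2 \<Rightarrow> real^2" where
  "planarF \<gamma> chi chi1 w =
     (let y = w$1; \<phi> = w$2 in
      vector [ 1/2 * (1 - y^2) * (y * (\<gamma> - 2) + (4 - 3*\<gamma>) / sqrt 6 * (chi1 \<phi> / chi \<phi>)),
               sqrt (2/3) * y ])"

definition charpoly :: "real^'n^'n \<Rightarrow> complex poly" where
  "charpoly A = det (\<chi> i j. (if i = j then [:0, 1:] else 0) - [:complex_of_real (A$i$j):])"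

definition eigenvalues :: "real^'n^'n \<Rightarrow> complex set" where
  "eigenvalues A = {l. \<exists>v :: complex^'n. v \<noteq> 0 \<and>
        (\<chi> i j. complex_of_real (A$i$j)) *v v = l *s v}"

definition stable_focus :: "(real^'n \<Rightarrow> real^'n) \<Rightarrow> real^'n \<Rightarrow> bool" where
  "stable_focus f p \<longleftrightarrow> f p = 0 \<and>
     (\<forall>l\<in>eigenvalues (jacobian f (at p)). Im l \<noteq> 0 \<and> Re l < 0)"

definition stable_node :: "(real^'n \<Rightarrow> real^'n) \<Rightarrow> real^'n \<Rightarrow> bool" where
  "stable_node f p \<longleftrightarrow> f p = 0 \<and>
     (\<forall>l\<in>eigenvalues (jacobian f (at p)). Im l = 0 \<and> Re l < 0)"

definition saddle :: "(real^'n \<Rightarrow> real^'n) \<Rightarrow> real^'n \<Rightarrow> bool" where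
  "saddle f p \<longleftrightarrow> f p = 0 \<and>
     (\<exists>l\<in>eigenvalues (jacobian f (at p)). Im l = 0 \<and> Re l > 0) \<and>
     (\<exists>l\<in>eigenvalues (jacobian f (at p)). Im l = 0 \<and> Re l < 0)"

definition non_hyperbolic :: "(real^'n \<Rightarrow> real^'n) \<Rightarrow> real^'n \<Rightarrow> bool" where
  "non_hyperbolic f p \<longleftrightarrow> f p = 0 \<and>
     (\<exists>l\<in>eigenvalues (jacobian f (at p)). Re l = 0)"

end

theory Submission
  imports Defs
begin

(* At a critical point phi1 of chi the only non-obvious entry
   comes from the logarithmic derivative chi'/chi, whose derivative there is chi''/chi.
   The Jacobian of system (\<ast>) at (0,0,1,phi1) is block diagonal: the 1x1 blocks gamma/2 and gamma
   (for x and z) and a 2x2 block [[2 D1, b], [sqrt(2/3), 0]] for (y, phi), which is exactly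
   the Jacobian of the planar system at (0,phi1).  Its characteristic polynomial is
   X^2 - 2 D1 X - e with e = D2 chi''(phi1)/chi(phi1), whose roots are D1 +- sqrt(D1^2 + e).
   The type of the planar equilibrium (D1 < 0) is then decided by the signs of D1^2 + e
   and e alone, and the case hypotheses of the theorem are translated into such signs. *)

lemma has_derivative_vec_componentwise:
  fixes f :: "'a::real_normed_vector \<Rightarrow> real^'n"
  assumes "\<forall>i. ((\<lambda>x. f x $ i) has_derivative (\<lambda>h. f' h $ i)) (at a within S)"
  shows "(f has_derivative f') (at a within S)"
  using assms by (subst has_derivative_componentwise_within) (auto simp: Basis_vec_def inner_axis)

lemma has_derivative_vec_nth: "((\<lambda>u::real^'n. u$i) has_derivative (\<lambda>h. h$i)) F"
  by (rule bounded_linear_imp_has_derivative) (rule bounded_linear_vec_nth)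

lemma has_derivative_comp_vec_nth:
  assumes "(g has_real_derivative d) (at (x$i))"
  shows "((\<lambda>u::real^'n. g (u$i)) has_derivative (\<lambda>h. d * h$i)) (at x)"
  using has_derivative_compose[OF has_derivative_vec_nth assms[unfolded has_field_derivative_def]]
  by simp

lemma jacobian_eqI:
  fixes M :: "real^'n^'m" and f :: "real^'n \<Rightarrow> real^'m"
  assumes "(f has_derivative (\<lambda>h. M *v h)) (at x)"
  shows "jacobian f (at x) = M"
  using frechet_derivative_at[OF assms] matrix_of_matrix_vector_mul[of M]
  by (simp add: jacobian_def)

text \<open>At a critical point of \<open>chi\<close> the logarithmic derivative \<open>chi'/chi\<close> has derivative
  \<open>chi''/chi\<close>; this is the only entry of the Jacobians that involves \<open>chi\<close>.\<close>
lemma log_derivative_at_critical_point: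
  fixes chi chi1 chi2 :: "real \<Rightarrow> real"
  assumes "(chi has_real_derivative chi1 t) (at t)" "(chi1 has_real_derivative chi2 t) (at t)"
    and "chi t \<noteq> 0" and "chi1 t = 0"
  shows "((\<lambda>s. chi1 s / chi s) has_real_derivative chi2 t / chi t) (at t)"
  using DERIV_divide[OF assms(2,1,3)] assms(3,4) by (simp add: power2_eq_square)

text \<open>Coordinates of an explicitly listed 4-vector (the library provides this up to dimension 3).\<close>
lemma vector_4_nth [simp]:
  "(vector [x, y, z, w] :: ('a::zero)^4) $ 1 = x"
  "(vector [x, y, z, w] :: ('a::zero)^4) $ 2 = y"
  "(vector [x, y, z, w] :: ('a::zero)^4) $ 3 = z"
  "(vector [x, y, z, w] :: ('a::zero)^4) $ 4 = w"
  unfolding vector_def by simp_all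

section \<open>The Jacobians at the equilibria\<close>

definition M2 :: "real \<Rightarrow> real \<Rightarrow> real \<Rightarrow> real^2^2" where
  "M2 u b s = vector [vector [u, b], vector [s, 0]]"

text \<open>The block-diagonal matrix \<open>diag(g/2, M2 u b s, g)\<close> acting on \<open>(x, (y, phi), z)\<close>,
  the shape of the linearization of system (\<ast>).\<close>
definition M4 :: "real \<Rightarrow> real \<Rightarrow> real \<Rightarrow> real \<Rightarrow> real^4^4" where
  "M4 g u b s = vector [vector [g/2, 0, 0, 0], vector [0, u, 0, b], vector [0, 0, g, 0],
                        vector [0, s, 0, 0]]"

text \<open>The quotient \<open>chi'/chi\<close> is treated as a
  single function \<open>G\<close>, which vanishes at \<open>phi1\<close> and has derivative \<open>chi''/chi\<close> there.\<close>
lemma jacobian_sysF: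
  fixes \<gamma> \<phi>1 :: real and V1 V2 chi chi1 chi2 :: "real \<Rightarrow> real"
  assumes V1: "(V1 has_real_derivative V2 \<phi>1) (at \<phi>1)"
    and chi: "(chi has_real_derivative chi1 \<phi>1) (at \<phi>1)"
             "(chi1 has_real_derivative chi2 \<phi>1) (at \<phi>1)"
    and "chi \<phi>1 \<noteq> 0" and crit: "chi1 \<phi>1 = 0"
  shows "jacobian (sysF \<gamma> V1 chi chi1) (at (vector [0, 0, 1, \<phi>1])) =
           M4 \<gamma> ((\<gamma> - 2)/2) ((4 - 3*\<gamma>)/(2 * sqrt 6) * (chi2 \<phi>1 / chi \<phi>1)) (sqrt (2/3))"
proof (rule jacobian_eqI)
  define G where "G s = chi1 s / chi s" for s
  let ?p = "vector [0, 0, 1, \<phi>1] :: real^4"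
  have V1': "((\<lambda>u::real^4. V1 (u$4)) has_derivative (\<lambda>h. V2 \<phi>1 * h$4)) (at ?p)"
    by (rule has_derivative_comp_vec_nth) (simp add: V1)
  have G': "((\<lambda>u::real^4. G (u$4)) has_derivative (\<lambda>h. chi2 \<phi>1 / chi \<phi>1 * h$4)) (at ?p)"
    unfolding G_def
    by (rule has_derivative_comp_vec_nth)
       (simp add: log_derivative_at_critical_point[of chi chi1 \<phi>1 chi2, OF chi \<open>chi \<phi>1 \<noteq> 0\<close> crit])
  have G0: "G \<phi>1 = 0" by (simp add: G_def crit)
  show "(sysF \<gamma> V1 chi chi1 has_derivative
          (\<lambda>h. M4 \<gamma> ((\<gamma> - 2)/2) ((4 - 3*\<gamma>)/(2 * sqrt 6) * (chi2 \<phi>1 / chi \<phi>1)) (sqrt (2/3)) *v h))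
          (at ?p)"
    unfolding sysF_def Let_def G_def[symmetric]
    apply (rule has_derivative_vec_componentwise)
    apply (simp only: forall_4)
    apply (intro conjI; simp;
           (rule derivative_eq_intros has_derivative_vec_nth V1' G' | simp)+;
           simp add: M4_def matrix_vector_mult_def sum_4 fun_eq_iff G0 ac_simps)
    done
qed

lemma jacobian_planarF:
  fixes \<gamma> \<phi>1 :: real and chi chi1 chi2 :: "real \<Rightarrow> real"
  assumes chi: "(chi has_real_derivative chi1 \<phi>1) (at \<phi>1)"
               "(chi1 has_real_derivative chi2 \<phi>1) (at \<phi>1)"
    and "chi \<phi>1 \<noteq> 0" and crit: "chi1 \<phi>1 = 0"
  shows "jacobian (planarF \<gamma> chi chi1) (at (vector [0, \<phi>1])) =
           M2 ((\<gamma> - 2)/2) ((4 - 3*\<gamma>)/(2 * sqrt 6) * (chi2 \<phi>1 / chi \<phi>1)) (sqrt (2/3))"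
proof (rule jacobian_eqI)
  define G where "G s = chi1 s / chi s" for s
  let ?q = "vector [0, \<phi>1] :: real^2"
  have G': "((\<lambda>u::real^2. G (u$2)) has_derivative (\<lambda>h. chi2 \<phi>1 / chi \<phi>1 * h$2)) (at ?q)"
    unfolding G_def
    by (rule has_derivative_comp_vec_nth)
       (simp add: log_derivative_at_critical_point[of chi chi1 \<phi>1 chi2, OF chi \<open>chi \<phi>1 \<noteq> 0\<close> crit])
  have G0: "G \<phi>1 = 0" by (simp add: G_def crit)
  show "(planarF \<gamma> chi chi1 has_derivative
          (\<lambda>h. M2 ((\<gamma> - 2)/2) ((4 - 3*\<gamma>)/(2 * sqrt 6) * (chi2 \<phi>1 / chi \<phi>1)) (sqrt (2/3)) *v h))
          (at ?q)"
    unfolding planarF_def Let_def G_def[symmetric]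
    apply (rule has_derivative_vec_componentwise)
    apply (simp only: forall_2)
    apply (intro conjI; simp;
           (rule derivative_eq_intros has_derivative_vec_nth G' | simp)+;
           simp add: M2_def matrix_vector_mult_def sum_2 fun_eq_iff G0 ac_simps)
    done
qed

section \<open>Characteristic polynomials and eigenvalues\<close>

lemma det_4:
  "det (A::'a::comm_ring_1^4^4) =
      A$1$1 * A$2$2 * A$3$3 * A$4$4 - A$1$1 * A$2$2 * A$3$4 * A$4$3
    - A$1$1 * A$2$3 * A$3$2 * A$4$4 + A$1$1 * A$2$3 * A$3$4 * A$4$2
    + A$1$1 * A$2$4 * A$3$2 * A$4$3 - A$1$1 * A$2$4 * A$3$3 * A$4$2
    - A$1$2 * A$2$1 * A$3$3 * A$4$4 + A$1$2 * A$2$1 * A$3$4 * A$4$3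
    + A$1$2 * A$2$3 * A$3$1 * A$4$4 - A$1$2 * A$2$3 * A$3$4 * A$4$1
    - A$1$2 * A$2$4 * A$3$1 * A$4$3 + A$1$2 * A$2$4 * A$3$3 * A$4$1
    + A$1$3 * A$2$1 * A$3$2 * A$4$4 - A$1$3 * A$2$1 * A$3$4 * A$4$2
    - A$1$3 * A$2$2 * A$3$1 * A$4$4 + A$1$3 * A$2$2 * A$3$4 * A$4$1
    + A$1$3 * A$2$4 * A$3$1 * A$4$2 - A$1$3 * A$2$4 * A$3$2 * A$4$1
    - A$1$4 * A$2$1 * A$3$2 * A$4$3 + A$1$4 * A$2$1 * A$3$3 * A$4$2
    + A$1$4 * A$2$2 * A$3$1 * A$4$3 - A$1$4 * A$2$2 * A$3$3 * A$4$1
    - A$1$4 * A$2$3 * A$3$1 * A$4$2 + A$1$4 * A$2$3 * A$3$2 * A$4$1"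
proof -
  have f1: "finite {2::4, 3, 4}" "1 \<notin> {2::4, 3, 4}" by auto
  have f2: "finite {3::4, 4}" "2 \<notin> {3::4, 4}" by auto
  have f3: "finite {4::4}" "3 \<notin> {4::4}" by auto
  show ?thesis
    unfolding det_def UNIV_4
    unfolding sum_over_permutations_insert[OF f1] sum_over_permutations_insert[OF f2]
      sum_over_permutations_insert[OF f3] permutes_sing
    by (simp add: sign_swap_id permutation_swap_id sign_compose sign_id swap_id_eq
        permutation_compose algebra_simps)
qed

lemma charpoly_M2:
  "charpoly (M2 u b s) = [:- complex_of_real (s * b), - complex_of_real u, 1:]"
  by (simp add: charpoly_def det_2 M2_def field_simps)

text \<open>Block diagonality: the characteristic polynomial of \<open>M4\<close> factors accordingly.\<close>
lemma charpoly_M4: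
  "charpoly (M4 g u b s) =
     [:- complex_of_real (g/2), 1:] * [:- complex_of_real g, 1:] * charpoly (M2 u b s)"
  by (simp add: charpoly_def det_4 det_2 M4_def M2_def field_simps)

lemma quadratic_factorization:
  fixes S :: complex and d e :: real
  assumes "S^2 = of_real (d^2 + e)"
  shows "[:- (of_real d + S), 1:] * [:- (of_real d - S), 1:] = [:- of_real e, - 2 * of_real d, 1:]"
proof -
  have "(of_real d + S) * (of_real d - S) = - of_real e"
    using assms by (simp add: algebra_simps power2_eq_square)
  then show ?thesis by (simp add: algebra_simps)
qed

text \<open>For \<open>s \<noteq> 0\<close> the eigenvalues of \<open>M2 u b s\<close> are exactly the roots of its characteristic
  polynomial \<open>X\<^sup>2 - uX - sb\<close>; an eigenvector for the root \<open>l\<close> is \<open>(l, s)\<close>.\<close>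
lemma eigenvalues_M2:
  assumes s: "s \<noteq> 0"
  shows "l \<in> eigenvalues (M2 u b s) \<longleftrightarrow> l^2 - of_real u * l - of_real (s * b) = 0"
proof
  assume "l \<in> eigenvalues (M2 u b s)"
  then obtain v :: "complex^2"
    where v: "v \<noteq> 0" "(\<chi> i j. complex_of_real (M2 u b s $ i $ j)) *v v = l *s v"
    by (auto simp: eigenvalues_def)
  from v(2) have row1: "of_real u * v$1 + of_real b * v$2 = l * v$1"
    and row2: "of_real s * v$1 = l * v$2"
    by (auto simp: vec_eq_iff forall_2 M2_def matrix_vector_mult_def sum_2)
  have "v$2 \<noteq> 0"
  proof
    assume "v$2 = 0"
    with row2 s have "v$1 = 0" by simp
    with \<open>v$2 = 0\<close> v(1) show False by (auto simp: vec_eq_iff forall_2)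
  qed
  moreover have "(l^2 - of_real u * l - of_real (s * b)) * v$2 = 0"
  proof -
    have "(l^2 - of_real u * l - of_real (s * b)) * v$2
        = of_real s * (l * v$1 - of_real u * v$1 - of_real b * v$2)"
      by (simp add: power2_eq_square algebra_simps flip: row2)
    also have "\<dots> = 0" by (simp add: algebra_simps flip: row1)
    finally show ?thesis .
  qed
  ultimately show "l^2 - of_real u * l - of_real (s * b) = 0" by simp
next
  assume root: "l^2 - of_real u * l - of_real (s * b) = 0"
  define v :: "complex^2" where "v = vector [l, of_real s]"
  have "v \<noteq> 0" using s by (auto simp: v_def vec_eq_iff forall_2)
  moreover have "of_real u * l + of_real b * of_real s = l * l"
    using root by (simp add: power2_eq_square algebra_simps)
  then have "(\<chi> i j. complex_of_real (M2 u b s $ i $ j)) *v v = l *s v"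
    by (auto simp: vec_eq_iff forall_2 M2_def matrix_vector_mult_def sum_2 v_def mult.commute)
  ultimately show "l \<in> eigenvalues (M2 u b s)" by (auto simp: eigenvalues_def)
qed

lemma quadratic_roots_focus:
  fixes l :: complex and d e :: real
  assumes root: "l^2 - 2 * of_real d * l - of_real e = 0" and "d < 0" "d^2 + e < 0"
  shows "Im l \<noteq> 0 \<and> Re l < 0"
proof -
  obtain x y where l: "l = Complex x y" by (cases l)
  from root have re: "x^2 - y^2 - 2*d*x - e = 0" and im: "2*x*y - 2*d*y = 0"
    by (simp_all add: l complex_eq_iff power2_eq_square)
  have "y \<noteq> 0"
  proof
    assume "y = 0"
    with re have "(x - d)^2 = d^2 + e" by (simp add: power2_eq_square algebra_simps)
    with assms(3) show False by (metis power2_less_0)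
  qed
  with im have "x = d" by simp
  with \<open>y \<noteq> 0\<close> assms(2) show ?thesis by (simp add: l)
qed

lemma quadratic_roots_node:
  fixes l :: complex and d e :: real
  assumes root: "l^2 - 2 * of_real d * l - of_real e = 0" and "d < 0" "e < 0" "d^2 + e \<ge> 0"
  shows "Im l = 0 \<and> Re l < 0"
proof -
  obtain x y where l: "l = Complex x y" by (cases l)
  from root have re: "x^2 - y^2 - 2*d*x - e = 0" and im: "2*x*y - 2*d*y = 0"
    by (simp_all add: l complex_eq_iff power2_eq_square)
  have "y = 0"
  proof (rule ccontr)
    assume "y \<noteq> 0"
    with im have "x = d" by simp
    with re have "y^2 = - (d^2 + e)" by (simp add: power2_eq_square algebra_simps)
    moreover have "y^2 > 0" using \<open>y \<noteq> 0\<close> by simp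
    ultimately show False using assms(4) by linarith
  qed
  moreover have "x < 0"
  proof (rule ccontr)
    assume "\<not> x < 0"
    then have "d * x \<le> 0" using assms(2) mult_nonpos_nonneg[of d x] by simp
    then have "x^2 - 2*d*x \<ge> 0" using zero_le_power2[of x] by linarith
    with re \<open>y = 0\<close> assms(3) show False by simp
  qed
  ultimately show ?thesis by (simp add: l)
qed

lemma quadratic_roots_saddle:
  fixes d e :: real
  assumes "e > 0"
  obtains r1 r2 where "r1 > 0" "r1^2 - 2*d*r1 - e = 0" "r2 < 0" "r2^2 - 2*d*r2 - e = 0"
proof
  define s where "s = sqrt (d^2 + e)"
  have s2: "s^2 = d^2 + e" using assms by (simp add: s_def add_pos_nonneg)
  have "\<bar>d\<bar> < s"
    unfolding s_def using assms real_sqrt_less_mono[of "d^2" "d^2 + e"] by (simp add: real_sqrt_abs)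
  then show "d + s > 0" "d - s < 0" by linarith+
  show "(d + s)^2 - 2*d*(d + s) - e = 0" "(d - s)^2 - 2*d*(d - s) - e = 0"
    using s2 by (simp_all add: power2_eq_square algebra_simps)
qed

section \<open>Classification of a planar equilibrium\<close>

lemma planar_equilibrium_types:
  fixes f :: "real^2 \<Rightarrow> real^2" and d b s :: real
  assumes eq: "f p = 0" and jac: "jacobian f (at p) = M2 (2 * d) b s"
    and s: "s \<noteq> 0" and d: "d < 0"
  shows "d^2 + s * b < 0 \<Longrightarrow> stable_focus f p"
    and "s * b < 0 \<Longrightarrow> 0 \<le> d^2 + s * b \<Longrightarrow> stable_node f p"
    and "s * b > 0 \<Longrightarrow> saddle f p"
    and "s * b = 0 \<Longrightarrow> non_hyperbolic f p"
proof -
  have eig: "l \<in> eigenvalues (jacobian f (at p)) \<longleftrightarrow>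
               l^2 - 2 * of_real d * l - of_real (s * b) = 0" for l
    unfolding jac eigenvalues_M2[OF s] by simp
  show "stable_focus f p" if "d^2 + s * b < 0"
    unfolding stable_focus_def using eq eig quadratic_roots_focus d that by blast
  show "stable_node f p" if "s * b < 0" "0 \<le> d^2 + s * b"
    unfolding stable_node_def using eq eig quadratic_roots_node d that by blast
  show "saddle f p" if pos: "s * b > 0"
  proof -
    obtain r1 r2 where r: "r1 > 0" "r1^2 - 2*d*r1 - s*b = 0" "r2 < 0" "r2^2 - 2*d*r2 - s*b = 0"
      using quadratic_roots_saddle[OF pos] by blast
    have as_real: "(complex_of_real r)^2 - 2 * of_real d * of_real r - of_real (s * b)
                     = of_real (r^2 - 2*d*r - s*b)" for r
      by simp
    have "of_real r1 \<in> eigenvalues (jacobian f (at p))" "of_real r2 \<in> eigenvalues (jacobian f (at p))"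
      unfolding eig as_real using r by simp_all
    with r eq show ?thesis unfolding saddle_def by force
  qed
  show "non_hyperbolic f p" if "s * b = 0"
    unfolding non_hyperbolic_def using eq eig[of 0] that by force
qed

text \<open>The case hypotheses of the theorem, phrased via \<open>k = chi''(phi1)\<close>, \<open>c = chi(phi1) > 0\<close> and
  the sign of \<open>b\<close>, expressed as signs of \<open>e = b k / c\<close> and of the discriminant \<open>a\<^sup>2 + e\<close>.\<close>
lemma case_hypotheses_as_signs:
  fixes a b k c :: real
  assumes c: "c > 0"
  shows "(b > 0 \<and> k < - (a^2 * c / b)) \<or> (b < 0 \<and> k > - (a^2 * c / b))
           \<Longrightarrow> a^2 + b * k / c < 0"
    and "(b > 0 \<and> - (a^2 * c / b) \<le> k \<and> k < 0) \<or> (b < 0 \<and> 0 < k \<and> k \<le> - (a^2 * c / b))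
           \<Longrightarrow> b * k / c < 0"
    and "(b > 0 \<and> - (a^2 * c / b) \<le> k \<and> k < 0) \<or> (b < 0 \<and> 0 < k \<and> k \<le> - (a^2 * c / b))
           \<Longrightarrow> 0 \<le> a^2 + b * k / c"
    and "(b > 0 \<and> k > 0) \<or> (b < 0 \<and> k < 0) \<Longrightarrow> b * k / c > 0"
proof -
  have discr: "a^2 + b * k / c = (a^2 * c + b * k) / c" using c by (simp add: field_simps)
  show "a^2 + b * k / c < 0"
    if "(b > 0 \<and> k < - (a^2 * c / b)) \<or> (b < 0 \<and> k > - (a^2 * c / b))"
    using that c unfolding discr by (auto simp: field_simps divide_less_0_iff)
  show "b * k / c < 0" "0 \<le> a^2 + b * k / c"
    if "(b > 0 \<and> - (a^2 * c / b) \<le> k \<and> k < 0) \<or> (b < 0 \<and> 0 < k \<and> k \<le> - (a^2 * c / b))"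
    using that c unfolding discr by (auto simp: field_simps mult_pos_neg mult_neg_pos)
  show "b * k / c > 0" if "(b > 0 \<and> k > 0) \<or> (b < 0 \<and> k < 0)"
    using that c by (auto simp: mult_neg_neg)
qed

text \<open>The off-diagonal product of the \<open>(y, phi)\<close> block: \<open>sqrt(2/3) \<cdot> a/(2 sqrt 6) = a/6\<close>.\<close>
lemma sqrt_two_thirds_scaling: "sqrt (2/3) * (a / (2 * sqrt 6)) = a / 6"
proof -
  have six: "sqrt 6 = 3 * sqrt (2/3::real)"
    using real_sqrt_mult[of 9 "2/3"] by simp
  show ?thesis unfolding six by (simp add: field_simps)
qed

theorem mainTheorem4:
  fixes \<gamma> \<phi>1 :: real
    and V V1 V2 V3 chi chi1 chi2 chi3 :: "real \<Rightarrow> real"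
  assumes gamma: "0 < \<gamma>" "\<gamma> < 2" "\<gamma> \<noteq> 4/3"
    and V_C3: "\<And>t. (V has_real_derivative V1 t) (at t)"
              "\<And>t. (V1 has_real_derivative V2 t) (at t)"
              "\<And>t. (V2 has_real_derivative V3 t) (at t)"
              "continuous_on UNIV V3"
    and V_nonneg: "\<And>t. V t \<ge> 0"
    and chi_C3: "\<And>t. (chi has_real_derivative chi1 t) (at t)"
                "\<And>t. (chi1 has_real_derivative chi2 t) (at t)"
                "\<And>t. (chi2 has_real_derivative chi3 t) (at t)"
                "continuous_on UNIV chi3"
    and chi_pos: "\<And>t. chi t > 0"
    and crit: "chi1 \<phi>1 = 0"
  defines "\<Delta>\<^sub>1 \<equiv> (\<gamma> - 2) / 4"
    and "\<Delta>\<^sub>2 \<equiv> (4 - 3*\<gamma>) / 6"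
    and "F \<equiv> sysF \<gamma> V1 chi chi1"
    and "P \<equiv> planarF \<gamma> chi chi1"
    and "p \<equiv> vector [0, 0, 1, \<phi>1] :: real^4"
    and "q \<equiv> vector [0, \<phi>1] :: real^2"
  shows
    \<comment> \<open>(a)\<close>
    "F p = 0 \<and>
     charpoly (jacobian F (at p)) =
       [:- complex_of_real (\<gamma>/2), 1:] * [:- complex_of_real \<gamma>, 1:] *
       [:- (complex_of_real \<Delta>\<^sub>1 + csqrt (complex_of_real (\<Delta>\<^sub>1^2 + \<Delta>\<^sub>2 * chi2 \<phi>1 / chi \<phi>1))), 1:] * [:- (complex_of_real \<Delta>\<^sub>1 - csqrt (complex_of_real (\<Delta>\<^sub>1^2 + \<Delta>\<^sub>2 * chi2 \<phi>1 / chi \<phi>1))), 1:]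
     \<and> P q = 0
     \<and> charpoly (jacobian P (at q)) =
         [:- (complex_of_real \<Delta>\<^sub>1 + csqrt (complex_of_real (\<Delta>\<^sub>1^2 + \<Delta>\<^sub>2 * chi2 \<phi>1 / chi \<phi>1))), 1:] * [:- (complex_of_real \<Delta>\<^sub>1 - csqrt (complex_of_real (\<Delta>\<^sub>1^2 + \<Delta>\<^sub>2 * chi2 \<phi>1 / chi \<phi>1))), 1:]
     \<and> (((\<gamma> < 4/3 \<and> chi2 \<phi>1 < - (\<Delta>\<^sub>1^2 * chi \<phi>1 / \<Delta>\<^sub>2)) \<or>
          (4/3 < \<gamma> \<and> chi2 \<phi>1 > - (\<Delta>\<^sub>1^2 * chi \<phi>1 / \<Delta>\<^sub>2))) \<longrightarrow> stable_focus P q)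
     \<and> (((\<gamma> < 4/3 \<and> - (\<Delta>\<^sub>1^2 * chi \<phi>1 / \<Delta>\<^sub>2) \<le> chi2 \<phi>1 \<and> chi2 \<phi>1 < 0) \<or>
          (4/3 < \<gamma> \<and> 0 < chi2 \<phi>1 \<and> chi2 \<phi>1 \<le> - (\<Delta>\<^sub>1^2 * chi \<phi>1 / \<Delta>\<^sub>2))) \<longrightarrow> stable_node P q)
     \<and> (((\<gamma> < 4/3 \<and> chi2 \<phi>1 > 0) \<or> (4/3 < \<gamma> \<and> chi2 \<phi>1 < 0)) \<longrightarrow> saddle P q)
     \<and> (chi2 \<phi>1 = 0 \<longrightarrow> non_hyperbolic P q)"
proof -
  let ?b = "(4 - 3*\<gamma>) / (2 * sqrt 6) * (chi2 \<phi>1 / chi \<phi>1)"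
  let ?S = "csqrt (complex_of_real (\<Delta>\<^sub>1^2 + \<Delta>\<^sub>2 * chi2 \<phi>1 / chi \<phi>1))"
  have chi0: "chi \<phi>1 \<noteq> 0" using chi_pos[of \<phi>1] by simp
  have "\<Delta>\<^sub>1 < 0" and D2_sign: "\<Delta>\<^sub>2 > 0 \<longleftrightarrow> \<gamma> < 4/3" "\<Delta>\<^sub>2 < 0 \<longleftrightarrow> 4/3 < \<gamma>"
    using gamma by (auto simp: \<Delta>\<^sub>1_def \<Delta>\<^sub>2_def)
  have diag: "(\<gamma> - 2) / 2 = 2 * \<Delta>\<^sub>1" by (simp add: \<Delta>\<^sub>1_def)
  have offdiag: "sqrt (2/3) * ?b = \<Delta>\<^sub>2 * chi2 \<phi>1 / chi \<phi>1"
    by (simp only: mult.assoc[symmetric] sqrt_two_thirds_scaling) (simp add: \<Delta>\<^sub>2_def)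
  have JF: "jacobian F (at p) = M4 \<gamma> (2 * \<Delta>\<^sub>1) ?b (sqrt (2/3))"
    unfolding F_def p_def diag[symmetric] using jacobian_sysF V_C3(2) chi_C3(1,2) chi0 crit .
  have JP: "jacobian P (at q) = M2 (2 * \<Delta>\<^sub>1) ?b (sqrt (2/3))"
    unfolding P_def q_def diag[symmetric] using jacobian_planarF chi_C3(1,2) chi0 crit .
  have char2: "charpoly (M2 (2 * \<Delta>\<^sub>1) ?b (sqrt (2/3))) =
                 [:- (complex_of_real \<Delta>\<^sub>1 + ?S), 1:] * [:- (complex_of_real \<Delta>\<^sub>1 - ?S), 1:]"
    unfolding charpoly_M2 offdiag
    by (subst quadratic_factorization[where e = "\<Delta>\<^sub>2 * chi2 \<phi>1 / chi \<phi>1"]) simp_all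
  have sqrt_nonzero: "sqrt (2/3) \<noteq> (0::real)" by simp
  have Pq: "P q = 0" by (simp add: P_def q_def planarF_def crit vec_eq_iff forall_2)
  note types = planar_equilibrium_types[OF Pq JP _ \<open>\<Delta>\<^sub>1 < 0\<close>, unfolded offdiag, OF sqrt_nonzero]
  note signs =
    case_hypotheses_as_signs(1-3)[where a = \<Delta>\<^sub>1 and b = \<Delta>\<^sub>2 and k = "chi2 \<phi>1", OF chi_pos, unfolded D2_sign]
    case_hypotheses_as_signs(4)[where b = \<Delta>\<^sub>2 and k = "chi2 \<phi>1", OF chi_pos, unfolded D2_sign]
  have "F p = 0" by (simp add: F_def p_def sysF_def crit vec_eq_iff forall_4)
  moreover have "charpoly (jacobian F (at p)) = [:- complex_of_real (\<gamma>/2), 1:] * [:- complex_of_real \<gamma>, 1:] *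
                   [:- (complex_of_real \<Delta>\<^sub>1 + ?S), 1:] * [:- (complex_of_real \<Delta>\<^sub>1 - ?S), 1:]"
    by (simp only: JF charpoly_M4 char2 mult.assoc)
  moreover note Pq
  moreover have "charpoly (jacobian P (at q)) =
                   [:- (complex_of_real \<Delta>\<^sub>1 + ?S), 1:] * [:- (complex_of_real \<Delta>\<^sub>1 - ?S), 1:]"
    by (simp only: JP char2)
  moreover have "chi2 \<phi>1 = 0 \<longrightarrow> non_hyperbolic P q" using types(4) by simp
  ultimately show ?thesis
    by (intro conjI impI) (assumption | erule mp | rule types | erule signs)+
qed

end
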